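(* Let $(X,\mathcal{M},\mu)$ be a measure space and $\Phi$ an $N^*$-function for which there is a constant $k\ge2$ with $\Phi(kx)=2\Phi(x)$ for all $x>0$. Then $(L_\Phi(X),\|\cdot\|_\Phi)$ is a quasi-Banach space, i.e. a quasi-normed space in which every sequence $(f_n)$ with $\|f_n-f_m\|_\Phi\to0$ as $n,m\to\infty$ converges in $\|\cdot\|_\Phi$.
   Context: An $N^*$-function is a function $\Phi:\mathbb{R}\to\mathbb{R}$ of the form $\Phi(x)=\int_0^{|x|}p(t)\,dt<+\infty$ for all $x$, where $p:[0,\infty)\to[0,\infty]$ is right-continuous, positive on $(0,\infty)$, non-increasing, and satisfies $\lim_{t\to0^+}p(t)=+\infty$ and $\lim_{t\to+\infty}p(t)=0$. $L_\Phi(X)$ is the space of (classes modulo a.e. equality of) measurable $f$ with $\int_X\Phi(f)\,d\mu<\infty$, and $\|f\|_\Phi=\inf\{\lambda>0:\int_X\Phi(|f|/\lambda)\,d\mu\le1\}$. *)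

theory Defs
  imports "HOL-Analysis.Analysis"
begin

text \<open>N*-function: \<Phi>(x) = integral of p over (0,|x|], with p positive, non-increasing,
 right-continuous on (0,\<infinity>), p(t) \<rightarrow> +\<infinity> as t \<rightarrow> 0+, p(t) \<rightarrow> 0 as t \<rightarrow> \<infinity>,
 and the integral finite for every x. (The value p(0) = +\<infinity> is irrelevant for the integral.)\<close>
definition Nstar_function :: "(real \<Rightarrow> real) \<Rightarrow> bool" where
  "Nstar_function \<Phi> \<longleftrightarrow>
     (\<exists>p :: real \<Rightarrow> real.
        (\<forall>t>0. p t > 0) \<and>
        (\<forall>s t. 0 < s \<longrightarrow> s \<le> t \<longrightarrow> p t \<le> p s) \<and>
        (\<forall>t>0. continuous (at_right t) p) \<and>
        filterlim p at_top (at_right 0) \<and>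
        (p \<longlongrightarrow> 0) at_top \<and>
        (\<forall>x. p integrable_on {0<..\<bar>x\<bar>} \<and> \<Phi> x = integral {0<..\<bar>x\<bar>} p))"

text \<open>Orlicz space L_\<Phi>(X): measurable f with \<integral> \<Phi>(f) d\<mu> < \<infinity> (representatives; the
 quotient modulo a.e. equality is handled through the null predicate below).\<close>
definition L_Phi :: "'a measure \<Rightarrow> (real \<Rightarrow> real) \<Rightarrow> ('a \<Rightarrow> real) set" where
  "L_Phi M \<Phi> = {f. f \<in> borel_measurable M \<and> (\<integral>\<^sup>+ x. ennreal (\<Phi> (f x)) \<partial>M) < \<infinity>}"

definition orlicz_norm :: "'a measure \<Rightarrow> (real \<Rightarrow> real) \<Rightarrow> ('a \<Rightarrow> real) \<Rightarrow> real" where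
  "orlicz_norm M \<Phi> f =
     Inf {l::real. l > 0 \<and> (\<integral>\<^sup>+ x. ennreal (\<Phi> (\<bar>f x\<bar> / l)) \<partial>M) \<le> 1}"

text \<open>Quasi-normed space of functions V with quasi-norm N, where Z f means
 "f is the zero element" (here: f = 0 almost everywhere).\<close>
definition quasi_normed :: "('a \<Rightarrow> real) set \<Rightarrow> (('a \<Rightarrow> real) \<Rightarrow> real) \<Rightarrow> (('a \<Rightarrow> real) \<Rightarrow> bool) \<Rightarrow> bool" where
  "quasi_normed V N Z \<longleftrightarrow>
     (\<lambda>x. 0) \<in> V \<and>
     (\<forall>f\<in>V. \<forall>g\<in>V. (\<lambda>x. f x + g x) \<in> V) \<and>
     (\<forall>c. \<forall>f\<in>V. (\<lambda>x. c * f x) \<in> V) \<and>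
     (\<forall>f\<in>V. 0 \<le> N f) \<and>
     (\<forall>f\<in>V. N f = 0 \<longleftrightarrow> Z f) \<and>
     (\<forall>c. \<forall>f\<in>V. N (\<lambda>x. c * f x) = \<bar>c\<bar> * N f) \<and>
     (\<exists>C\<ge>1. \<forall>f\<in>V. \<forall>g\<in>V. N (\<lambda>x. f x + g x) \<le> C * (N f + N g))"

definition quasi_banach :: "('a \<Rightarrow> real) set \<Rightarrow> (('a \<Rightarrow> real) \<Rightarrow> real) \<Rightarrow> (('a \<Rightarrow> real) \<Rightarrow> bool) \<Rightarrow> bool" where
  "quasi_banach V N Z \<longleftrightarrow>
     quasi_normed V N Z \<and>
     (\<forall>F :: nat \<Rightarrow> 'a \<Rightarrow> real.
        (\<forall>n. F n \<in> V) \<and>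
        (\<forall>e>0. \<exists>n0. \<forall>n\<ge>n0. \<forall>m\<ge>n0. N (\<lambda>x. F n x - F m x) < e) \<longrightarrow>
        (\<exists>f\<in>V. (\<lambda>n. N (\<lambda>x. F n x - f x)) \<longlonglongrightarrow> 0))"

end

theory Submission
  imports Defs
begin

text \<open>The doubling condition makes the modular rho(f) = integral of Phi(f) a substitute for
  homogeneity: rho(k^m f) = 2^m rho(f), so a norm below k^-m forces a modular below 2^-m and
  conversely. Together with Phi(a + b) <= Phi(k max(|a|, |b|)) <= 2 Phi(a) + 2 Phi(b) this gives the
  quasi-triangle inequality with constant k^2. For completeness, a subsequence F_j of a Cauchy
  sequence with norm(F_(j+1) - F_j) < k^-j has summable modulars rho(F_(j+1) - F_j); since
  Phi(x) >= c min(|x|, 1), the increments are then absolutely summable almost everywhere, so the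
  subsequence converges a.e., and Fatou's lemma together with the continuity of Phi carries the
  Cauchy bounds over to the limit.\<close>

lemma has_integral_Ioc_iff_Icc:
  fixes f :: "real \<Rightarrow> 'a::banach"
  shows "(f has_integral I) {a<..b} \<longleftrightarrow> (f has_integral I) {a..b}"
proof (rule has_integral_spike_set_eq)
  show "negligible {x \<in> {a<..b} - {a..b}. f x \<noteq> 0}"
    by (rule negligible_subset[OF negligible_empty]) auto
  show "negligible {x \<in> {a..b} - {a<..b}. f x \<noteq> 0}"
    by (rule negligible_subset[OF negligible_sing[of a]]) auto
qed

lemma Nstar_functionE:
  assumes "Nstar_function \<Phi>"
  obtains p where "\<And>t. 0 < t \<Longrightarrow> 0 < p t" and "\<And>s t. 0 < s \<Longrightarrow> s \<le> t \<Longrightarrow> p t \<le> p s"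
    and "\<And>x. (p has_integral \<Phi> x) {0<..\<bar>x\<bar>}"
  using assms unfolding Nstar_function_def by (metis has_integral_integrable_integral)

lemma Nstar_function_mono:
  assumes "Nstar_function \<Phi>" and "\<bar>x\<bar> \<le> \<bar>y\<bar>"
  shows "\<Phi> x \<le> \<Phi> y"
proof -
  obtain p where pos: "\<And>t. 0 < t \<Longrightarrow> 0 < p t"
    and int: "\<And>x. (p has_integral \<Phi> x) {0<..\<bar>x\<bar>}"
    using assms(1) by (elim Nstar_functionE) (rule that)
  show ?thesis
  proof (rule has_integral_subset_le[OF _ int[of x] int[of y]])
    show "{0<..\<bar>x\<bar>} \<subseteq> {0<..\<bar>y\<bar>}"
      using assms(2) by auto
    show "\<forall>t\<in>{0<..\<bar>y\<bar>}. 0 \<le> p t"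
      using pos by (simp add: less_imp_le)
  qed
qed

lemma Nstar_function_zero:
  assumes "Nstar_function \<Phi>"
  shows "\<Phi> 0 = 0"
proof -
  obtain p where "\<And>x. (p has_integral \<Phi> x) {0<..\<bar>x\<bar>}"
    using assms by (elim Nstar_functionE) (rule that)
  from this[of 0] show ?thesis by simp
qed

lemma Nstar_function_continuous:
  assumes "Nstar_function \<Phi>"
  shows "continuous_on UNIV \<Phi>"
proof -
  obtain p where "\<And>x. (p has_integral \<Phi> x) {0<..\<bar>x\<bar>}"
    using assms by (elim Nstar_functionE) (rule that)
  then have int: "(p has_integral \<Phi> x) {0..\<bar>x\<bar>}" for x
    by (simp add: has_integral_Ioc_iff_Icc)
  have cont: "continuous_on {-b..b} \<Phi>" if "0 \<le> b" for b
  proof -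
    have "continuous_on {0..b} (\<lambda>y. integral {0..y} p)"
      using int[of b] that by (intro indefinite_integral_continuous_1) auto
    then have "continuous_on {-b..b} (\<lambda>y. integral {0..\<bar>y\<bar>} p)"
      by (rule continuous_on_compose2[where f=abs])
        (auto intro: continuous_on_rabs[OF continuous_on_id])
    moreover have "integral {0..\<bar>y\<bar>} p = \<Phi> y" for y
      using int by (rule integral_unique)
    ultimately show ?thesis by simp
  qed
  have "isCont \<Phi> x" for x
    using cont[of "\<bar>x\<bar> + 1"] continuous_on_interior[of "{-(\<bar>x\<bar>+1)..\<bar>x\<bar>+1}" \<Phi> x]
      abs_ge_self[of x] abs_ge_minus_self[of x] by simp
  then show ?thesis by (simp add: continuous_at_imp_continuous_on)
qed

lemma Nstar_function_ge_linear:
  assumes "Nstar_function \<Phi>"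
  shows "\<exists>c>0. \<forall>x. c * min \<bar>x\<bar> 1 \<le> \<Phi> x"
proof -
  obtain p where pos: "\<And>t. 0 < t \<Longrightarrow> 0 < p t"
    and anti: "\<And>s t. 0 < s \<Longrightarrow> s \<le> t \<Longrightarrow> p t \<le> p s"
    and int: "\<And>x. (p has_integral \<Phi> x) {0<..\<bar>x\<bar>}"
    using assms by (elim Nstar_functionE) (rule that)
  have small: "p 1 * \<bar>x\<bar> \<le> \<Phi> x" if "\<bar>x\<bar> \<le> 1" for x
  proof -
    have "((\<lambda>_. p 1) has_integral p 1 * \<bar>x\<bar>) {0<..\<bar>x\<bar>}"
      using has_integral_const_real[of "p 1" 0 "\<bar>x\<bar>"]
      by (simp add: has_integral_Ioc_iff_Icc mult.commute)
    then show ?thesis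
      by (rule has_integral_le[OF _ int[of x]]) (use anti that in auto)
  qed
  have "p 1 * min \<bar>x\<bar> 1 \<le> \<Phi> x" for x
  proof (cases "\<bar>x\<bar> \<le> 1")
    case False
    then show ?thesis
      using small[of 1] Nstar_function_mono[OF assms, of 1 x] by simp
  qed (use small in simp)
  with pos[of 1] show ?thesis by auto
qed

lemma Cauchy_rate_indexE:
  fixes D :: "nat \<Rightarrow> nat \<Rightarrow> real" and \<epsilon> :: "nat \<Rightarrow> real"
  assumes "\<forall>e>0. \<exists>n0. \<forall>n\<ge>n0. \<forall>m\<ge>n0. D n m < e" and "\<And>i. 0 < \<epsilon> i"
  obtains \<phi> where "mono \<phi>" and "\<And>i a b. \<phi> i \<le> a \<Longrightarrow> \<phi> i \<le> b \<Longrightarrow> D a b < \<epsilon> i"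
proof -
  have "\<exists>n0. \<forall>a\<ge>n0. \<forall>b\<ge>n0. D a b < \<epsilon> i" for i
    using assms by blast
  then obtain \<phi>0 where \<phi>0: "\<And>i a b. \<phi>0 i \<le> a \<Longrightarrow> \<phi>0 i \<le> b \<Longrightarrow> D a b < \<epsilon> i"
    by metis
  define \<phi> where "\<phi> i = (\<Sum>j\<le>i. \<phi>0 j)" for i
  have "mono \<phi>"
    unfolding \<phi>_def by (intro monoI sum_mono2) auto
  moreover have "\<phi>0 i \<le> \<phi> i" for i
    unfolding \<phi>_def by (intro member_le_sum) auto
  ultimately show ?thesis
    using \<phi>0 that by (meson order.trans)
qed

locale doubling_orlicz_function =
  fixes \<Phi> :: "real \<Rightarrow> real" and k :: real
  assumes Phi_mono: "\<And>x y. \<bar>x\<bar> \<le> \<bar>y\<bar> \<Longrightarrow> \<Phi> x \<le> \<Phi> y"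
    and Phi_zero: "\<Phi> 0 = 0"
    and Phi_continuous: "continuous_on UNIV \<Phi>"
    and Phi_ge_linear: "\<exists>c>0. \<forall>x. c * min \<bar>x\<bar> 1 \<le> \<Phi> x"
    and k_ge_2: "2 \<le> k"
    and Phi_doubling: "\<And>x. 0 < x \<Longrightarrow> \<Phi> (k * x) = 2 * \<Phi> x"
begin

lemma Phi_abs [simp]: "\<Phi> \<bar>x\<bar> = \<Phi> x"
  using Phi_mono[of x "\<bar>x\<bar>"] Phi_mono[of "\<bar>x\<bar>" x] by simp

lemma Phi_nonneg: "0 \<le> \<Phi> x"
  using Phi_mono[of 0 x] Phi_zero by simp

lemma k_pos: "0 < k"
  using k_ge_2 by simp

lemma isCont_Phi: "isCont \<Phi> x"
  using Phi_continuous by (simp add: continuous_on_eq_continuous_at)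

lemma borel_measurable_Phi [measurable]: "\<Phi> \<in> borel_measurable borel"
  using Phi_continuous by (rule borel_measurable_continuous_onI)

lemma Phi_doubling_power: "\<Phi> (k ^ m * x) = 2 ^ m * \<Phi> x"
proof (induction m)
  case (Suc m)
  have "\<Phi> (k * y) = 2 * \<Phi> y" for y
  proof (cases "y = 0")
    case False
    have "\<Phi> (k * y) = \<Phi> (k * \<bar>y\<bar>)"
      using Phi_abs[of "k * y"] k_pos by (simp add: abs_mult)
    with False show ?thesis by (simp add: Phi_doubling)
  qed (simp add: Phi_zero)
  from this[of "k ^ m * x"] Suc show ?case by (simp add: mult.assoc)
qed simp

lemma Phi_add_le: "\<Phi> (a + b) \<le> 2 * \<Phi> a + 2 * \<Phi> b"
proof -
  have "\<bar>a + b\<bar> \<le> 2 * max \<bar>a\<bar> \<bar>b\<bar>"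
    using abs_triangle_ineq[of a b] by (simp add: max_def)
  also have "\<dots> \<le> abs (k * max \<bar>a\<bar> \<bar>b\<bar>)"
    using k_ge_2 by (simp add: abs_mult mult_right_mono)
  finally have "\<Phi> (a + b) \<le> \<Phi> (k * max \<bar>a\<bar> \<bar>b\<bar>)"
    by (rule Phi_mono)
  also have "\<dots> = 2 * \<Phi> (max \<bar>a\<bar> \<bar>b\<bar>)"
    using Phi_doubling_power[of 1] by simp
  also have "\<Phi> (max \<bar>a\<bar> \<bar>b\<bar>) \<le> \<Phi> a + \<Phi> b"
    using Phi_nonneg[of a] Phi_nonneg[of b] by (simp add: max_def)
  finally show ?thesis by simp
qed

lemma Phi_pos: "x \<noteq> 0 \<Longrightarrow> 0 < \<Phi> x"
  using Phi_ge_linear by (smt (verit) min_def mult_pos_pos zero_less_abs_iff)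

lemma Phi_unbounded: "\<exists>t. B < \<Phi> t"
proof -
  obtain m where "B / \<Phi> 1 < 2 ^ m"
    using real_arch_pow[of 2 "B / \<Phi> 1"] by auto
  then have "B < \<Phi> (k ^ m * 1)"
    using Phi_pos[of 1] by (simp only: Phi_doubling_power) (simp add: divide_less_eq)
  then show ?thesis ..
qed

lemma summable_of_summable_Phi:
  assumes "summable (\<lambda>j. \<Phi> (d j))"
  shows "summable d"
proof -
  obtain c where c: "0 < c" "\<And>x. c * min \<bar>x\<bar> 1 \<le> \<Phi> x"
    using Phi_ge_linear by blast
  have "eventually (\<lambda>j. \<Phi> (d j) < c) sequentially"
    using summable_LIMSEQ_zero[OF assms] c(1) by (rule order_tendstoD)
  then have "eventually (\<lambda>j. norm (d j) \<le> \<Phi> (d j) / c) sequentially"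
  proof eventually_elim
    case (elim j)
    with c(2)[of "d j"] have "c * \<bar>d j\<bar> \<le> \<Phi> (d j)"
      by (smt (verit) min_def mult_le_cancel_left1)
    with c(1) show ?case by (simp add: field_simps)
  qed
  then show ?thesis
    using summable_divide[OF assms] by (rule summable_comparison_test_ev)
qed

end

lemma ennreal_power2_mult_le_1_iff:
  "ennreal (2 ^ m) * X \<le> 1 \<longleftrightarrow> X \<le> ennreal ((1/2) ^ m)"
proof -
  have "ennreal (2 ^ m) * ennreal ((1/2) ^ m) = 1"
    by (simp add: ennreal_mult[symmetric] power_mult_distrib[symmetric])
  moreover have "ennreal (2 ^ m) * X \<le> ennreal (2 ^ m) * ennreal ((1/2) ^ m)
      \<longleftrightarrow> X \<le> ennreal ((1/2) ^ m)"
    by (rule ennreal_mult_le_mult_iff) auto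
  ultimately show ?thesis by simp
qed

locale orlicz_space = doubling_orlicz_function +
  fixes M :: "'a measure"
begin

definition modular :: "('a \<Rightarrow> real) \<Rightarrow> ennreal" where
  "modular g = (\<integral>\<^sup>+ x. ennreal (\<Phi> (g x)) \<partial>M)"

abbreviation N :: "('a \<Rightarrow> real) \<Rightarrow> real" where
  "N \<equiv> orlicz_norm M \<Phi>"

lemma orlicz_norm_eq_Inf_modular: "N g = Inf {l. 0 < l \<and> modular (\<lambda>x. \<bar>g x\<bar> / l) \<le> 1}"
  by (simp add: orlicz_norm_def modular_def)

lemma L_Phi_iff: "g \<in> L_Phi M \<Phi> \<longleftrightarrow> g \<in> borel_measurable M \<and> modular g < \<infinity>"
  by (simp add: L_Phi_def modular_def)

lemma modular_abs: "modular (\<lambda>x. \<bar>g x\<bar>) = modular g"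
  by (simp add: modular_def)

lemma modular_AE_zero: "AE x in M. g x = 0 \<Longrightarrow> modular g = 0"
  unfolding modular_def by (subst nn_integral_cong_AE[where v="\<lambda>x. 0"]) (auto simp: Phi_zero)

lemma modular_mono: "(\<And>x. x \<in> space M \<Longrightarrow> \<bar>f x\<bar> \<le> \<bar>g x\<bar>) \<Longrightarrow> modular f \<le> modular g"
  unfolding modular_def by (intro nn_integral_mono) (auto intro!: ennreal_leI Phi_mono)

lemma modular_mult_power:
  assumes [measurable]: "g \<in> borel_measurable M"
  shows "modular (\<lambda>x. k ^ m * g x) = ennreal (2 ^ m) * modular g"
  unfolding modular_def Phi_doubling_power
  by (subst nn_integral_cmult[symmetric]) (auto simp: ennreal_mult Phi_nonneg)

lemma modular_add_le:
  assumes [measurable]: "f \<in> borel_measurable M" "g \<in> borel_measurable M"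
  shows "modular (\<lambda>x. f x + g x) \<le> 2 * modular f + 2 * modular g"
proof -
  have "modular (\<lambda>x. f x + g x)
      \<le> (\<integral>\<^sup>+ x. 2 * ennreal (\<Phi> (f x)) + 2 * ennreal (\<Phi> (g x)) \<partial>M)"
    unfolding modular_def
  proof (intro nn_integral_mono)
    fix x
    have "ennreal (\<Phi> (f x + g x)) \<le> ennreal (2 * \<Phi> (f x) + 2 * \<Phi> (g x))"
      by (rule ennreal_leI) (rule Phi_add_le)
    then show "ennreal (\<Phi> (f x + g x)) \<le> 2 * ennreal (\<Phi> (f x)) + 2 * ennreal (\<Phi> (g x))"
      using Phi_nonneg by (simp add: ennreal_mult)
  qed
  also have "\<dots> = 2 * modular f + 2 * modular g"
    unfolding modular_def by (simp add: nn_integral_add nn_integral_cmult)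
  finally show ?thesis .
qed

lemma modular_div_power:
  assumes [measurable]: "g \<in> borel_measurable M"
  shows "modular g = ennreal (2 ^ m) * modular (\<lambda>x. \<bar>g x\<bar> / k ^ m)"
proof -
  have "(\<lambda>x. k ^ m * (\<bar>g x\<bar> / k ^ m)) = (\<lambda>x. \<bar>g x\<bar>)"
    using k_pos by simp
  then show ?thesis
    using modular_mult_power[of "\<lambda>x. \<bar>g x\<bar> / k ^ m" m] by (simp add: modular_abs)
qed

lemma modular_div_power_le:
  assumes "g \<in> borel_measurable M" "0 < l" "modular (\<lambda>x. \<bar>g x\<bar> / l) \<le> 1"
  shows "modular (\<lambda>x. \<bar>g x\<bar> / (k ^ m * l)) \<le> ennreal ((1/2) ^ m)"
proof -
  have "modular (\<lambda>x. \<bar>g x\<bar> / l) = ennreal (2 ^ m) * modular (\<lambda>x. \<bar>g x\<bar> / (k ^ m * l))"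
    using modular_div_power[of "\<lambda>x. \<bar>g x\<bar> / l" m] assms(1,2) by (simp add: mult.commute)
  with assms(3) show ?thesis
    by (simp add: ennreal_power2_mult_le_1_iff)
qed

lemma modular_le_1_mono:
  assumes "modular (\<lambda>x. \<bar>g x\<bar> / l) \<le> 1" "0 < l" "l \<le> l'"
  shows "modular (\<lambda>x. \<bar>g x\<bar> / l') \<le> 1"
  using modular_mono[of "\<lambda>x. \<bar>g x\<bar> / l'" "\<lambda>x. \<bar>g x\<bar> / l"] assms
  by (force intro: divide_left_mono)

lemma exists_modular_le_1:
  assumes "g \<in> L_Phi M \<Phi>"
  shows "\<exists>l>0. modular (\<lambda>x. \<bar>g x\<bar> / l) \<le> 1"
proof -
  from assms obtain r where [measurable]: "g \<in> borel_measurable M" and r: "modular g = ennreal r"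
    by (auto simp: L_Phi_iff less_top_ennreal)
  obtain m where "r < 2 ^ m"
    using real_arch_pow[of 2 r] by auto
  have "ennreal (2 ^ m) * modular (\<lambda>x. \<bar>g x\<bar> / k ^ m) = ennreal r"
    using modular_div_power[of g m] r by simp
  also have "\<dots> \<le> ennreal (2 ^ m) * 1"
    unfolding mult_1_right using \<open>r < 2 ^ m\<close> by (intro ennreal_leI) simp
  finally have "modular (\<lambda>x. \<bar>g x\<bar> / k ^ m) \<le> 1"
    by (subst (asm) ennreal_mult_le_mult_iff) auto
  then show ?thesis
    using k_pos by (intro exI[of _ "k ^ m"]) auto
qed

lemma orlicz_norm_le: "0 < l \<Longrightarrow> modular (\<lambda>x. \<bar>g x\<bar> / l) \<le> 1 \<Longrightarrow> N g \<le> l"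
  unfolding orlicz_norm_eq_Inf_modular by (rule cInf_lower) (auto intro!: bdd_belowI[of _ 0])

lemma orlicz_norm_nonneg: "g \<in> L_Phi M \<Phi> \<Longrightarrow> 0 \<le> N g"
  unfolding orlicz_norm_eq_Inf_modular using exists_modular_le_1 by (intro cInf_greatest) auto

lemma modular_le_1_if_orlicz_norm_less:
  assumes "g \<in> L_Phi M \<Phi>" "N g < l"
  shows "modular (\<lambda>x. \<bar>g x\<bar> / l) \<le> 1"
proof -
  have "{l. 0 < l \<and> modular (\<lambda>x. \<bar>g x\<bar> / l) \<le> 1} \<noteq> {}"
    using exists_modular_le_1[OF assms(1)] by auto
  from cInf_lessD[OF this] assms(2)
  obtain l' where "0 < l'" "modular (\<lambda>x. \<bar>g x\<bar> / l') \<le> 1" "l' < l"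
    unfolding orlicz_norm_eq_Inf_modular by blast
  then show ?thesis
    by (auto intro: modular_le_1_mono)
qed

lemma modular_le_if_orlicz_norm_less:
  assumes "g \<in> L_Phi M \<Phi>" "N g < (1/k) ^ m"
  shows "modular g \<le> ennreal ((1/2) ^ m)"
  using modular_div_power_le[of g "(1/k) ^ m" m] modular_le_1_if_orlicz_norm_less[OF assms]
    assms(1) k_pos
  by (simp add: L_Phi_iff power_one_over modular_abs)

lemma orlicz_norm_le_if_modular_le:
  assumes [measurable]: "g \<in> borel_measurable M" and "modular g \<le> ennreal ((1/2) ^ m)"
  shows "N g \<le> (1/k) ^ m"
proof (rule orlicz_norm_le)
  have "modular (\<lambda>x. \<bar>g x\<bar> / (1/k) ^ m) = ennreal (2 ^ m) * modular g"
    using modular_mult_power[of "\<lambda>x. \<bar>g x\<bar>" m] k_pos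
    by (simp add: power_one_over modular_abs mult.commute)
  with assms(2) show "modular (\<lambda>x. \<bar>g x\<bar> / (1/k) ^ m) \<le> 1"
    by (simp add: ennreal_power2_mult_le_1_iff)
qed (use k_pos in simp)

lemma zero_in_L_Phi: "(\<lambda>x. 0) \<in> L_Phi M \<Phi>"
  by (simp add: L_Phi_iff modular_AE_zero)

lemma add_in_L_Phi:
  assumes "f \<in> L_Phi M \<Phi>" "g \<in> L_Phi M \<Phi>"
  shows "(\<lambda>x. f x + g x) \<in> L_Phi M \<Phi>"
proof -
  from assms have [measurable]: "f \<in> borel_measurable M" "g \<in> borel_measurable M"
    and "2 * modular f + 2 * modular g < \<infinity>"
    by (auto simp: L_Phi_iff ennreal_mult_less_top)
  then show ?thesis
    using modular_add_le[of f g] by (auto simp: L_Phi_iff order.strict_trans1)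
qed

lemma mult_in_L_Phi:
  assumes "f \<in> L_Phi M \<Phi>"
  shows "(\<lambda>x. c * f x) \<in> L_Phi M \<Phi>"
proof -
  from assms have [measurable]: "f \<in> borel_measurable M" and "modular f < \<infinity>"
    by (auto simp: L_Phi_iff)
  obtain m where m: "\<bar>c\<bar> < k ^ m"
    using real_arch_pow[of k "\<bar>c\<bar>"] k_ge_2 by auto
  have "modular (\<lambda>x. c * f x) \<le> modular (\<lambda>x. k ^ m * f x)"
    using m k_pos by (intro modular_mono) (auto simp: abs_mult intro!: mult_right_mono)
  also have "\<dots> = ennreal (2 ^ m) * modular f"
    by (rule modular_mult_power) measurable
  also have "\<dots> < \<infinity>"
    using \<open>modular f < \<infinity>\<close> by (simp add: ennreal_mult_less_top)
  finally show ?thesis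
    by (simp add: L_Phi_iff)
qed

lemma diff_in_L_Phi: "f \<in> L_Phi M \<Phi> \<Longrightarrow> g \<in> L_Phi M \<Phi> \<Longrightarrow> (\<lambda>x. f x - g x) \<in> L_Phi M \<Phi>"
  using add_in_L_Phi[of f "\<lambda>x. -1 * g x"] mult_in_L_Phi[of g "-1"] by simp

lemma orlicz_norm_AE_zero: "AE x in M. g x = 0 \<Longrightarrow> N g = 0"
proof -
  assume "AE x in M. g x = 0"
  then have "modular (\<lambda>x. \<bar>g x\<bar> / l) = 0" for l
    by (intro modular_AE_zero) auto
  then have "{l. 0 < l \<and> modular (\<lambda>x. \<bar>g x\<bar> / l) \<le> 1} = {0<..}"
    by auto
  then show ?thesis
    by (simp add: orlicz_norm_eq_Inf_modular)
qed

lemma Phi_mult_emeasure_le_modular: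
  assumes [measurable]: "g \<in> borel_measurable M" and "0 \<le> t"
  shows "ennreal (\<Phi> t) * emeasure M {x \<in> space M. t \<le> \<bar>g x\<bar>} \<le> modular g"
proof -
  have "ennreal (\<Phi> t) * emeasure M {x \<in> space M. t \<le> \<bar>g x\<bar>}
      = (\<integral>\<^sup>+ x. ennreal (\<Phi> t) * indicator {x \<in> space M. t \<le> \<bar>g x\<bar>} x \<partial>M)"
    by (simp add: nn_integral_cmult_indicator)
  also have "\<dots> \<le> modular g"
    unfolding modular_def
    using \<open>0 \<le> t\<close>
    by (intro nn_integral_mono) (auto simp: indicator_def intro!: ennreal_leI Phi_mono)
  finally show ?thesis .
qed

lemma AE_zero_if_orlicz_norm_zero:
  assumes g: "g \<in> L_Phi M \<Phi>" and "N g = 0"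
  shows "AE x in M. g x = 0"
proof -
  have [measurable]: "g \<in> borel_measurable M"
    using g by (simp add: L_Phi_iff)
  have null: "emeasure M {x \<in> space M. e \<le> \<bar>g x\<bar>} = 0" if "0 < e" for e
  proof -
    let ?A = "{x \<in> space M. e \<le> \<bar>g x\<bar>}"
    have bound: "ennreal (\<Phi> t) * emeasure M ?A \<le> 1" if "0 < t" for t
    proof -
      have "modular (\<lambda>x. \<bar>g x\<bar> / (e / t)) \<le> 1"
        by (rule modular_le_1_if_orlicz_norm_less[OF g])
          (use \<open>N g = 0\<close> \<open>0 < e\<close> \<open>0 < t\<close> in simp)
      moreover have "{x \<in> space M. t \<le> \<bar>\<bar>g x\<bar> / (e / t)\<bar>} = ?A"
        using \<open>0 < e\<close> \<open>0 < t\<close> by (auto simp: field_simps)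
      ultimately show ?thesis
        using Phi_mult_emeasure_le_modular[of "\<lambda>x. \<bar>g x\<bar> / (e / t)" t] \<open>0 < t\<close> by simp
    qed
    show ?thesis
    proof (rule ccontr)
      assume "emeasure M ?A \<noteq> 0"
      moreover have "emeasure M ?A \<noteq> \<infinity>"
        using bound[of 1] Phi_pos[of 1] by (auto simp: ennreal_mult_top top_unique)
      ultimately obtain a where a: "emeasure M ?A = ennreal a" "0 < a"
        by (cases "emeasure M ?A") (auto simp: not_less)
      obtain t where t: "1 / a < \<Phi> t"
        using Phi_unbounded by blast
      then have "t \<noteq> 0"
        using a(2) Phi_zero by auto
      then have "\<Phi> t * a \<le> 1"
        using bound[of "\<bar>t\<bar>"] a Phi_nonneg by (simp add: ennreal_mult[symmetric])
      with t a(2) show False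
        by (simp add: field_simps)
    qed
  qed
  have "AE x in M. \<forall>i::nat. \<bar>g x\<bar> < 1 / Suc i"
    unfolding AE_all_countable
  proof
    fix i :: nat
    show "AE x in M. \<bar>g x\<bar> < 1 / Suc i"
      using null[of "1 / Suc i"] by (subst AE_iff_measurable[OF _ refl]) (auto simp: not_less)
  qed
  then show ?thesis
  proof eventually_elim
    case (elim x)
    show "g x = 0"
    proof (rule ccontr)
      assume "g x \<noteq> 0"
      then obtain i where "1 / Suc i < \<bar>g x\<bar>"
        using reals_Archimedean[of "\<bar>g x\<bar>"] by (auto simp: inverse_eq_divide)
      with elim show False
        by (meson less_asym)
    qed
  qed
qed

lemma orlicz_norm_mult_le:
  assumes f: "f \<in> L_Phi M \<Phi>" and "c \<noteq> 0"
  shows "N (\<lambda>x. c * f x) \<le> \<bar>c\<bar> * N f"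
proof -
  have "N (\<lambda>x. c * f x) / \<bar>c\<bar> \<le> l" if "N f < l" for l
  proof -
    have "0 < l"
      using orlicz_norm_nonneg[OF f] that by simp
    moreover have "(\<lambda>x. \<bar>c * f x\<bar> / (\<bar>c\<bar> * l)) = (\<lambda>x. \<bar>f x\<bar> / l)"
      using \<open>c \<noteq> 0\<close> by (auto simp: abs_mult)
    ultimately have "N (\<lambda>x. c * f x) \<le> \<bar>c\<bar> * l"
      using modular_le_1_if_orlicz_norm_less[OF f that] \<open>c \<noteq> 0\<close> by (intro orlicz_norm_le) auto
    then show ?thesis
      using \<open>c \<noteq> 0\<close> by (simp add: field_simps)
  qed
  then have "N (\<lambda>x. c * f x) / \<bar>c\<bar> \<le> N f"
    by (rule dense_ge)
  then show ?thesis
    using \<open>c \<noteq> 0\<close> by (simp add: field_simps)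
qed

lemma orlicz_norm_mult:
  assumes f: "f \<in> L_Phi M \<Phi>"
  shows "N (\<lambda>x. c * f x) = \<bar>c\<bar> * N f"
proof (cases "c = 0")
  case True
  then show ?thesis
    by (simp add: orlicz_norm_AE_zero)
next
  case False
  have "N f = N (\<lambda>x. (1 / c) * (c * f x))"
    using False by simp
  also have "\<dots> \<le> \<bar>1 / c\<bar> * N (\<lambda>x. c * f x)"
    using False by (intro orlicz_norm_mult_le mult_in_L_Phi f) simp
  finally have "\<bar>c\<bar> * N f \<le> N (\<lambda>x. c * f x)"
    using False by (simp add: field_simps)
  with orlicz_norm_mult_le[OF f False] show ?thesis
    by simp
qed

lemma orlicz_norm_add_le_sum:
  assumes f: "f \<in> L_Phi M \<Phi>" and g: "g \<in> L_Phi M \<Phi>" and "N f < l1" "N g < l2"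
  shows "N (\<lambda>x. f x + g x) \<le> k ^ 2 * (l1 + l2)"
proof -
  have [measurable]: "f \<in> borel_measurable M" "g \<in> borel_measurable M"
    using f g by (auto simp: L_Phi_iff)
  have "0 < l1" "0 < l2"
    using assms orlicz_norm_nonneg[OF f] orlicz_norm_nonneg[OF g] by linarith+
  define L where "L = k ^ 2 * (l1 + l2)"
  have "0 < L"
    using \<open>0 < l1\<close> \<open>0 < l2\<close> k_pos by (simp add: L_def)
  have quarter: "modular (\<lambda>x. h x / L) \<le> ennreal ((1/2) ^ 2)"
    if [measurable]: "h \<in> borel_measurable M" and "0 < l" "l \<le> l1 + l2"
      and "modular (\<lambda>x. \<bar>h x\<bar> / l) \<le> 1" for h l
  proof -
    have "modular (\<lambda>x. \<bar>h x\<bar> / (l1 + l2)) \<le> 1"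
      using that by (blast intro: modular_le_1_mono)
    then have "modular (\<lambda>x. \<bar>h x\<bar> / L) \<le> ennreal ((1/2) ^ 2)"
      unfolding L_def using \<open>0 < l\<close> \<open>l \<le> l1 + l2\<close> by (intro modular_div_power_le) auto
    then show ?thesis
      using modular_abs[of "\<lambda>x. h x / L"] \<open>0 < L\<close> by simp
  qed
  have "modular (\<lambda>x. \<bar>f x + g x\<bar> / L) = modular (\<lambda>x. \<bar>f x / L + g x / L\<bar>)"
    using \<open>0 < L\<close> by (simp add: add_divide_distrib[symmetric])
  also have "\<dots> = modular (\<lambda>x. f x / L + g x / L)"
    by (rule modular_abs)
  also have "\<dots> \<le> 2 * modular (\<lambda>x. f x / L) + 2 * modular (\<lambda>x. g x / L)"
    by (rule modular_add_le) measurable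
  also have "\<dots> \<le> 2 * ennreal ((1/2) ^ 2) + 2 * ennreal ((1/2) ^ 2)"
    using \<open>0 < l1\<close> \<open>0 < l2\<close> modular_le_1_if_orlicz_norm_less[OF f \<open>N f < l1\<close>]
      modular_le_1_if_orlicz_norm_less[OF g \<open>N g < l2\<close>]
    by (intro add_mono mult_left_mono quarter) auto
  also have "\<dots> = 1"
  proof -
    have "2 * ennreal ((1/2) ^ 2) = ennreal 2 * ennreal ((1/2) ^ 2)"
      by simp
    also have "\<dots> = ennreal (1/2)"
      by (subst ennreal_mult[symmetric]) (auto simp: power2_eq_square)
    finally have half: "2 * ennreal ((1/2) ^ 2) = ennreal (1/2)" .
    have "ennreal (1/2) + ennreal (1/2) = 1"
      by (subst ennreal_plus[symmetric]) auto
    then show ?thesis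
      by (simp only: half)
  qed
  finally show ?thesis
    unfolding L_def using \<open>0 < L\<close> L_def by (intro orlicz_norm_le) auto
qed

lemma orlicz_norm_add_le:
  assumes f: "f \<in> L_Phi M \<Phi>" and g: "g \<in> L_Phi M \<Phi>"
  shows "N (\<lambda>x. f x + g x) \<le> k ^ 2 * (N f + N g)"
proof (rule field_le_epsilon)
  fix e :: real
  assume "0 < e"
  define d where "d = e / (2 * k ^ 2)"
  have "0 < d"
    using \<open>0 < e\<close> k_pos by (simp add: d_def)
  then have "N (\<lambda>x. f x + g x) \<le> k ^ 2 * ((N f + d) + (N g + d))"
    by (intro orlicz_norm_add_le_sum f g) auto
  also have "\<dots> = k ^ 2 * (N f + N g) + e"
    using k_pos by (simp add: d_def field_simps)
  finally show "N (\<lambda>x. f x + g x) \<le> k ^ 2 * (N f + N g) + e" .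
qed

lemma AE_convergent_if_modular_diff_le:
  assumes [measurable]: "\<And>j. G j \<in> borel_measurable M"
    and diff: "\<And>j. modular (\<lambda>x. G (Suc j) x - G j x) \<le> ennreal ((1/2) ^ j)"
  shows "AE x in M. convergent (\<lambda>j. G j x)"
proof -
  define d where "d j = (\<lambda>x. G (Suc j) x - G j x)" for j
  have [measurable]: "d j \<in> borel_measurable M" for j
    unfolding d_def by measurable
  have "(\<integral>\<^sup>+ x. (\<Sum>j. ennreal (\<Phi> (d j x))) \<partial>M) = (\<Sum>j. modular (d j))"
    unfolding modular_def by (rule nn_integral_suminf) measurable
  also have "\<dots> \<le> (\<Sum>j. ennreal ((1/2) ^ j))"
    using diff unfolding d_def by (rule suminf_le) simp_all
  also have "\<dots> = ennreal (\<Sum>j. (1/2) ^ j)"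
    by (rule suminf_ennreal2) (simp_all add: summable_geometric)
  also have "\<dots> < \<infinity>"
    by simp
  finally have "(\<integral>\<^sup>+ x. (\<Sum>j. ennreal (\<Phi> (d j x))) \<partial>M) \<noteq> \<infinity>"
    by simp
  then have "AE x in M. (\<Sum>j. ennreal (\<Phi> (d j x))) \<noteq> \<infinity>"
    by (intro nn_integral_noteq_infinite) measurable
  then show ?thesis
  proof eventually_elim
    case (elim x)
    then have "summable (\<lambda>j. \<Phi> (d j x))"
      using Phi_nonneg by (intro summable_suminf_not_top) auto
    then have "summable (\<lambda>j. d j x)"
      by (rule summable_of_summable_Phi)
    moreover have "(\<lambda>j. G j x) = (\<lambda>j. G 0 x + (\<Sum>i<j. d i x))"
      using sum_lessThan_telescope[of "\<lambda>i. G i x"] by (simp add: d_def)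
    ultimately show ?case
      by (simp add: summable_iff_convergent convergent_add_const_iff)
  qed
qed

lemma modular_le_if_AE_tendsto:
  assumes [measurable]: "\<And>j. g j \<in> borel_measurable M" "f \<in> borel_measurable M"
    and "AE x in M. (\<lambda>j. g j x) \<longlonglongrightarrow> f x"
    and "eventually (\<lambda>j. modular (g j) \<le> B) sequentially"
  shows "modular f \<le> B"
proof -
  have "modular f = (\<integral>\<^sup>+ x. liminf (\<lambda>j. ennreal (\<Phi> (g j x))) \<partial>M)"
    unfolding modular_def
  proof (rule nn_integral_cong_AE)
    show "AE x in M. ennreal (\<Phi> (f x)) = liminf (\<lambda>j. ennreal (\<Phi> (g j x)))"
      using assms(3)
    proof eventually_elim
      case (elim x)
      then have "(\<lambda>j. ennreal (\<Phi> (g j x))) \<longlonglongrightarrow> ennreal (\<Phi> (f x))"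
        by (intro tendsto_ennrealI isCont_tendsto_compose[OF isCont_Phi])
      then show ?case
        by (intro lim_imp_Liminf[symmetric]) simp_all
    qed
  qed
  also have "\<dots> \<le> liminf (\<lambda>j. modular (g j))"
    unfolding modular_def by (rule nn_integral_liminf) measurable
  also have "\<dots> \<le> B"
    using assms(4) by (intro Liminf_le) simp_all
  finally show ?thesis .
qed

lemma L_Phi_complete:
  assumes F: "\<And>n. F n \<in> L_Phi M \<Phi>"
    and Cauchy: "\<forall>e>0. \<exists>n0. \<forall>n\<ge>n0. \<forall>m\<ge>n0. N (\<lambda>x. F n x - F m x) < e"
  shows "\<exists>f\<in>L_Phi M \<Phi>. (\<lambda>n. N (\<lambda>x. F n x - f x)) \<longlonglongrightarrow> 0"
proof -
  have [measurable]: "F n \<in> borel_measurable M" for n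
    using F by (simp add: L_Phi_iff)
  obtain \<phi> where "mono \<phi>"
    and \<phi>: "\<And>i a b. \<phi> i \<le> a \<Longrightarrow> \<phi> i \<le> b \<Longrightarrow> N (\<lambda>x. F a x - F b x) < (1/k) ^ i"
    using Cauchy_rate_indexE[OF Cauchy, of "\<lambda>i. (1/k) ^ i"] k_pos by auto
  have close: "modular (\<lambda>x. F a x - F b x) \<le> ennreal ((1/2) ^ i)"
    if "\<phi> i \<le> a" "\<phi> i \<le> b" for i a b
    using \<phi>[OF that] F by (intro modular_le_if_orlicz_norm_less diff_in_L_Phi)
  have "AE x in M. convergent (\<lambda>j. F (\<phi> j) x)"
    using close monoD[OF \<open>mono \<phi>\<close>] by (intro AE_convergent_if_modular_diff_le) auto
  then have lim: "AE x in M. (\<lambda>j. F (\<phi> j) x) \<longlonglongrightarrow> lim (\<lambda>j. F (\<phi> j) x)"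
    by eventually_elim (simp add: convergent_LIMSEQ_iff)
  define f where "f x = lim (\<lambda>j. F (\<phi> j) x)" for x
  have [measurable]: "f \<in> borel_measurable M"
    unfolding f_def by measurable
  have tail: "modular (\<lambda>x. F n x - f x) \<le> ennreal ((1/2) ^ i)" if "\<phi> i \<le> n" for n i
  proof (rule modular_le_if_AE_tendsto)
    show "AE x in M. (\<lambda>j. F n x - F (\<phi> j) x) \<longlonglongrightarrow> F n x - f x"
      using lim by eventually_elim (auto simp: f_def intro: tendsto_diff)
    show "\<forall>\<^sub>F j in sequentially. modular (\<lambda>x. F n x - F (\<phi> j) x) \<le> ennreal ((1/2) ^ i)"
      using that monoD[OF \<open>mono \<phi>\<close>] by (intro eventually_sequentiallyI[of i] close) auto
  qed measurable
  have "(\<lambda>x. F (\<phi> 0) x - f x) \<in> L_Phi M \<Phi>"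
    using tail[of 0 "\<phi> 0"] by (simp add: L_Phi_iff order.strict_trans1)
  from diff_in_L_Phi[OF F[of "\<phi> 0"] this] have fL: "f \<in> L_Phi M \<Phi>"
    by simp
  have "(\<lambda>n. N (\<lambda>x. F n x - f x)) \<longlonglongrightarrow> 0"
  proof (rule LIMSEQ_I)
    fix r :: real
    assume "0 < r"
    then obtain i where "(1/k) ^ i < r"
      using real_arch_pow_inv[of r "1/k"] k_ge_2 by auto
    moreover have "0 \<le> N (\<lambda>x. F n x - f x)" "N (\<lambda>x. F n x - f x) \<le> (1/k) ^ i"
      if "\<phi> i \<le> n" for n
      using F fL tail[OF that]
      by (auto intro: orlicz_norm_nonneg diff_in_L_Phi orlicz_norm_le_if_modular_le)
    ultimately have "\<forall>n\<ge>\<phi> i. norm (N (\<lambda>x. F n x - f x) - 0) < r"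
      by fastforce
    then show "\<exists>n0. \<forall>n\<ge>n0. norm (N (\<lambda>x. F n x - f x) - 0) < r" ..
  qed
  with fL show ?thesis
    by blast
qed

lemma quasi_normed_L_Phi: "quasi_normed (L_Phi M \<Phi>) N (\<lambda>f. AE x in M. f x = 0)"
proof -
  have "1 \<le> k ^ 2"
    using k_ge_2 by simp
  then show ?thesis
    unfolding quasi_normed_def
    using zero_in_L_Phi add_in_L_Phi mult_in_L_Phi orlicz_norm_nonneg orlicz_norm_mult
      orlicz_norm_add_le orlicz_norm_AE_zero AE_zero_if_orlicz_norm_zero
    by (intro conjI exI[of _ "k ^ 2"] ballI allI) auto
qed

lemma quasi_banach_L_Phi: "quasi_banach (L_Phi M \<Phi>) N (\<lambda>f. AE x in M. f x = 0)"
  unfolding quasi_banach_def using quasi_normed_L_Phi L_Phi_complete by blast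

end

theorem mainTheorem14:
  fixes M :: "'a measure" and \<Phi> :: "real \<Rightarrow> real" and k :: real
  assumes "Nstar_function \<Phi>"
    and "k \<ge> 2"
    and "\<forall>x>0. \<Phi> (k * x) = 2 * \<Phi> x"
  shows "quasi_banach (L_Phi M \<Phi>) (orlicz_norm M \<Phi>) (\<lambda>f. AE x in M. f x = 0)"
proof -
  interpret orlicz_space \<Phi> k M
    using assms Nstar_function_mono Nstar_function_zero Nstar_function_continuous
      Nstar_function_ge_linear
    by unfold_locales auto
  show ?thesis
    by (rule quasi_banach_L_Phi)
qed

end
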